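(* Let $X$ be a complex Banach space. For every $\gamma\in\mathrm{lin}(\Gamma(\mathbb{D}))\otimes X$, $d^{\widehat{\mathcal{B}}}_1(\gamma)=\inf\left\{\sum_{i=1}^n\frac{|\lambda_i|}{1-|z_i|^2}\|x_i\|\right\}$ and $d^{\widehat{\mathcal{B}}}_\infty(\gamma)=\inf\left\{\sup_{g\in B_{\widehat{\mathcal{B}}(\mathbb{D})}}\sum_{i=1}^n|\lambda_i||g'(z_i)|\|x_i\|\right\}$, where both infima are taken over all representations $\gamma=\sum_{i=1}^n\lambda_i\gamma_{z_i}\otimes x_i$.
   Context: $\mathbb{D}=\{z\in\mathbb{C}:|z|<1\}$. $\widehat{\mathcal{B}}(\mathbb{D},Y)$ (for a complex Banach space $Y$) is the Banach space of holomorphic $f:\mathbb{D}\to Y$ with $f(0)=0$ and $p_{\mathcal{B}}(f)=\sup_{z\in\mathbb{D}}(1-|z|^2)\|f'(z)\|<\infty$, normed by $p_{\mathcal{B}}$; $\widehat{\mathcal{B}}(\mathbb{D})=\widehat{\mathcal{B}}(\mathbb{D},\mathbb{C})$ with closed unit ball $B_{\widehat{\mathcal{B}}(\mathbb{D})}$. For $z\in\mathbb{D}$, $x\in X$, $\gamma_z\otimes x$ is the functional on $\widehat{\mathcal{B}}(\mathbb{D},X^* )$ given by $(\gamma_z\otimes x)(f)=\langle f'(z),x\rangle$, and $\mathrm{lin}(\Gamma(\mathbb{D}))\otimes X$ is the linear span of all $\gamma_z\otimes x$ in $\widehat{\mathcal{B}}(\mathbb{D},X^* )^*$, with elements written $\sum_{i=1}^n\lambda_i\gamma_{z_i}\otimes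 x_i$ (non-uniquely). With infima over all such representations of $\gamma$: $d^{\widehat{\mathcal{B}}}_1(\gamma)=\inf\left(\sup_{g\in B_{\widehat{\mathcal{B}}(\mathbb{D})}}\max_{1\leq i\leq n}|\lambda_i||g'(z_i)|\right)\left(\sum_{i=1}^n\|x_i\|\right)$ and $d^{\widehat{\mathcal{B}}}_\infty(\gamma)=\inf\left(\sup_{g\in B_{\widehat{\mathcal{B}}(\mathbb{D})}}\sum_{i=1}^n|\lambda_i||g'(z_i)|\right)\left(\max_{1\leq i\leq n}\|x_i\|\right)$. *)

theory Defs
  imports "HOL-Complex_Analysis.Complex_Analysis"
begin

text \<open>A complex Banach space X is modelled as a real Banach space (type class banach)
  together with a complex scalar multiplication cm compatible with the real one and
  with the norm.\<close>
definition complex_scalar :: "(complex \<Rightarrow> 'x::banach \<Rightarrow> 'x) \<Rightarrow> bool" where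
  "complex_scalar cm \<longleftrightarrow>
     (\<forall>a b x. cm a (cm b x) = cm (a * b) x) \<and>
     (\<forall>a x y. cm a (x + y) = cm a x + cm a y) \<and>
     (\<forall>a b x. cm (a + b) x = cm a x + cm b x) \<and>
     (\<forall>r x. cm (complex_of_real r) x = r *\<^sub>R x) \<and>
     (\<forall>a x. norm (cm a x) = cmod a * norm x)"

definition cdual :: "(complex \<Rightarrow> 'x::banach \<Rightarrow> 'x) \<Rightarrow> ('x \<Rightarrow> complex) \<Rightarrow> bool" where
  "cdual cm \<phi> \<longleftrightarrow>
     (\<forall>x y. \<phi> (x + y) = \<phi> x + \<phi> y) \<and>
     (\<forall>a x. \<phi> (cm a x) = a * \<phi> x) \<and>
     (\<exists>C. \<forall>x. cmod (\<phi> x) \<le> C * norm x)"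

definition dnorm :: "('x::real_normed_vector \<Rightarrow> complex) \<Rightarrow> real" where
  "dnorm \<phi> = Sup ((\<lambda>x. cmod (\<phi> x)) ` {x. norm x \<le> 1})"

text \<open>The space \<open>\<widehat>\<B>(\<D>, X*)\<close>: pairs (f, f') where f is holomorphic on the unit disc
  (in the norm of X*) with derivative f', f(0) = 0, and finite Bloch seminorm.\<close>
definition BlochX :: "(complex \<Rightarrow> 'x::banach \<Rightarrow> 'x) \<Rightarrow>
    ((complex \<Rightarrow> 'x \<Rightarrow> complex) \<times> (complex \<Rightarrow> 'x \<Rightarrow> complex)) set" where
  "BlochX cm = {(f, f'').
     (\<forall>z\<in>ball 0 1. cdual cm (f z) \<and> cdual cm (f'' z)) \<and>
     (\<forall>z\<in>ball 0 1. ((\<lambda>w. dnorm (\<lambda>x. (f w x - f z x) / (w - z) - f'' z x)) \<longlongrightarrow> 0) (at z)) \<and>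
     f 0 = (\<lambda>x. 0) \<and>
     (\<exists>C. \<forall>z\<in>ball 0 1. (1 - (cmod z)\<^sup>2) * dnorm (f'' z) \<le> C)}"

text \<open>A representation \<open>\<Sum> \<lambda>_i \<gamma>_{z_i} \<otimes> x_i\<close> is a nonempty list of triples (\<lambda>_i, z_i, x_i)
  with z_i in the unit disc.\<close>
definition valid_rep :: "(complex \<times> complex \<times> 'x) list \<Rightarrow> bool" where
  "valid_rep R \<longleftrightarrow> R \<noteq> [] \<and> (\<forall>(l, z, x) \<in> set R. z \<in> ball 0 1)"

definition eval_rep :: "(complex \<Rightarrow> 'x \<Rightarrow> complex) \<Rightarrow> (complex \<times> complex \<times> 'x) list \<Rightarrow> complex" where
  "eval_rep f'' R = sum_list (map (\<lambda>(l, z, x). l * f'' z x) R)"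

text \<open>Two representations define the same functional on \<open>\<widehat>\<B>(\<D>, X*)\<close>.\<close>
definition same_gamma :: "(complex \<Rightarrow> 'x::banach \<Rightarrow> 'x) \<Rightarrow>
    (complex \<times> complex \<times> 'x) list \<Rightarrow> (complex \<times> complex \<times> 'x) list \<Rightarrow> bool" where
  "same_gamma cm R S \<longleftrightarrow> (\<forall>(f, f'') \<in> BlochX cm. eval_rep f'' R = eval_rep f'' S)"

definition BlochBall :: "(complex \<Rightarrow> complex) set" where
  "BlochBall = {g. g holomorphic_on ball 0 1 \<and> g 0 = 0 \<and>
       (\<forall>z\<in>ball 0 1. (1 - (cmod z)\<^sup>2) * cmod (deriv g z) \<le> 1)}"

definition d1 :: "(complex \<Rightarrow> 'x::banach \<Rightarrow> 'x) \<Rightarrow> (complex \<times> complex \<times> 'x) list \<Rightarrow> real" where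
  "d1 cm R0 = Inf {(SUP g\<in>BlochBall. Max (set (map (\<lambda>(l, z, x). cmod l * cmod (deriv g z)) R)))
                    * sum_list (map (\<lambda>(l, z, x). norm x) R)
                  | R. valid_rep R \<and> same_gamma cm R R0}"

definition dinf :: "(complex \<Rightarrow> 'x::banach \<Rightarrow> 'x) \<Rightarrow> (complex \<times> complex \<times> 'x) list \<Rightarrow> real" where
  "dinf cm R0 = Inf {(SUP g\<in>BlochBall. sum_list (map (\<lambda>(l, z, x). cmod l * cmod (deriv g z)) R))
                    * Max (set (map (\<lambda>(l, z, x). norm x) R))
                  | R. valid_rep R \<and> same_gamma cm R R0}"

end

theory Submission
  imports Defs
begin

text \<open>Rescaling a term of a representation, \<open>\<lambda> \<gamma>\<^sub>z \<otimes> x = (\<lambda>/s) \<gamma>\<^sub>z \<otimes> (s x)\<close>, does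
  not change \<open>\<gamma>\<close>. Since the supremum of \<open>|g'(z)|\<close> over the unit ball of the Bloch space is
  \<open>1/(1 - |z|\<^sup>2)\<close>, attained by \<open>g(w) = (1 - |z|\<^sup>2) w / (1 - conj z w)\<close>, the quantity
  defining \<open>d\<^sub>1\<close> for a representation is \<open>max\<^sub>i |\<lambda>\<^sub>i|/(1 - |z\<^sub>i|\<^sup>2) \<cdot> \<Sum>\<^sub>i \<parallel>x\<^sub>i\<parallel>\<close>. It dominates
  \<open>\<Sum>\<^sub>i |\<lambda>\<^sub>i|/(1 - |z\<^sub>i|\<^sup>2) \<parallel>x\<^sub>i\<parallel>\<close>, with equality after rescaling to \<open>|\<lambda>\<^sub>i| = 1 - |z\<^sub>i|\<^sup>2\<close>.
  Likewise the quantity defining \<open>d\<^sub>\<infinity>\<close> dominates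
  \<open>sup\<^sub>g \<Sum>\<^sub>i |\<lambda>\<^sub>i| |g'(z\<^sub>i)| \<parallel>x\<^sub>i\<parallel>\<close>, with equality after rescaling to \<open>\<parallel>x\<^sub>i\<parallel> = 1\<close>.
  Two such mutually dominating families have the same infimum.\<close>

lemma INF_eq_INF_if_interleaved:
  fixes T V :: "'a \<Rightarrow> 'b::conditionally_complete_lattice"
  assumes "A \<noteq> {}" "bdd_below (V ` A)"
    and "\<And>a. a \<in> A \<Longrightarrow> T a \<le> V a"
    and "\<And>a. a \<in> A \<Longrightarrow> \<exists>b\<in>A. V b \<le> T a"
  shows "(INF a\<in>A. V a) = (INF a\<in>A. T a)"
proof (rule order.antisym)
  show "(INF a\<in>A. V a) \<le> (INF a\<in>A. T a)"
    using assms by (intro cINF_mono) auto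
  obtain m where m: "\<And>a. a \<in> A \<Longrightarrow> m \<le> V a"
    using assms(2) by (auto simp: bdd_below_def)
  have "m \<le> T a" if "a \<in> A" for a
    using assms(4)[OF that] m by (meson order.trans)
  then have "bdd_below (T ` A)"
    by (rule bdd_belowI2)
  then show "(INF a\<in>A. T a) \<le> (INF a\<in>A. V a)"
    using assms by (intro cINF_mono) auto
qed

lemma one_minus_norm_sq_pos: "z \<in> ball 0 1 \<Longrightarrow> 0 < 1 - (cmod z)\<^sup>2"
  by (simp add: abs_square_less_1)

lemma zero_in_BlochBall: "(\<lambda>_. 0) \<in> BlochBall"
  unfolding BlochBall_def by auto

lemma BlochBall_deriv_bound:
  assumes "g \<in> BlochBall" "z \<in> ball 0 1"
  shows "cmod (deriv g z) \<le> 1 / (1 - (cmod z)\<^sup>2)"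
  using assms one_minus_norm_sq_pos[OF assms(2)] by (simp add: BlochBall_def field_simps)

lemma norm_one_minus_cnj_mult_sq:
  fixes z w :: complex
  shows "(cmod (1 - cnj z * w))\<^sup>2 = (cmod (z - w))\<^sup>2 + (1 - (cmod z)\<^sup>2) * (1 - (cmod w)\<^sup>2)"
  unfolding cmod_power2 by (simp add: algebra_simps power2_eq_square)

lemma BlochBall_extremal:
  assumes z: "z \<in> ball 0 1"
  shows "\<exists>g\<in>BlochBall. cmod (deriv g z) = 1 / (1 - (cmod z)\<^sup>2)"
proof -
  define c where "c = 1 - (cmod z)\<^sup>2"
  have c: "0 < c" unfolding c_def using one_minus_norm_sq_pos[OF z] .
  define g where "g w = of_real c * w / (1 - cnj z * w)" for w
  have denom_nonzero: "1 - cnj z * w \<noteq> 0" if "w \<in> ball 0 1" for w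
  proof -
    have "cmod (cnj z * w) < 1"
      using mult_strict_mono'[of "cmod z" 1 "cmod w" 1] z that by (simp add: norm_mult)
    then show ?thesis by auto
  qed
  have deriv_g: "(g has_field_derivative of_real c / (1 - cnj z * w)\<^sup>2) (at w)"
    if "w \<in> ball 0 1" for w
    unfolding g_def using denom_nonzero[OF that]
    by (auto intro!: derivative_eq_intros simp: field_simps power2_eq_square)
  have "g holomorphic_on ball 0 1"
    using deriv_g holomorphic_on_def field_differentiable_def
    by (metis at_within_open field_differentiable_at_within open_ball)
  moreover have "(1 - (cmod w)\<^sup>2) * cmod (deriv g w) \<le> 1" if w: "w \<in> ball 0 1" for w
  proof -
    have "(1 - (cmod w)\<^sup>2) * cmod (deriv g w) = c * (1 - (cmod w)\<^sup>2) / (cmod (1 - cnj z * w))\<^sup>2"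
      using DERIV_imp_deriv[OF deriv_g[OF w]] c by (simp add: norm_divide norm_power)
    also have "\<dots> \<le> 1"
    proof -
      have "c * (1 - (cmod w)\<^sup>2) \<le> (cmod (1 - cnj z * w))\<^sup>2"
        using norm_one_minus_cnj_mult_sq[of z w] unfolding c_def by simp
      then show ?thesis
        using denom_nonzero[OF w] by simp
    qed
    finally show ?thesis .
  qed
  moreover have "cmod (deriv g z) = 1 / c"
  proof -
    have "1 - cnj z * z = of_real c"
      unfolding c_def using complex_norm_square[of z] by (simp add: mult.commute)
    then show ?thesis
      using DERIV_imp_deriv[OF deriv_g[OF z]] c by (simp add: norm_divide norm_power power2_eq_square)
  qed
  ultimately show ?thesis unfolding BlochBall_def c_def by (auto simp: g_def)
qed

definition representations ::
    "(complex \<Rightarrow> 'x::banach \<Rightarrow> 'x) \<Rightarrow> (complex \<times> complex \<times> 'x) list \<Rightarrow>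
     (complex \<times> complex \<times> 'x) list set" where
  "representations cm R0 = {R. valid_rep R \<and> same_gamma cm R R0}"

lemma self_in_representations: "valid_rep R0 \<Longrightarrow> R0 \<in> representations cm R0"
  by (auto simp: representations_def same_gamma_def)

lemma valid_rep_if_in_representations: "R \<in> representations cm R0 \<Longrightarrow> valid_rep R"
  by (simp add: representations_def)

definition rescale_rep ::
    "(complex \<Rightarrow> complex \<Rightarrow> 'x \<Rightarrow> real) \<Rightarrow> (complex \<times> complex \<times> 'x::real_vector) list \<Rightarrow>
     (complex \<times> complex \<times> 'x) list" where
  "rescale_rep s = map (\<lambda>(l, z, x). (l / of_real (s l z x), z, s l z x *\<^sub>R x))"

text \<open>For \<open>s = 0\<close> the rescaled term is \<open>(l / 0) \<gamma>\<^sub>z \<otimes> 0 = 0\<close>, so the original term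
  must already vanish.\<close>

definition rescaling_admissible ::
    "(complex \<Rightarrow> complex \<Rightarrow> 'x \<Rightarrow> real) \<Rightarrow> (complex \<times> complex \<times> 'x::zero) list \<Rightarrow> bool" where
  "rescaling_admissible s R \<longleftrightarrow> (\<forall>(l, z, x) \<in> set R. s l z x = 0 \<longrightarrow> l = 0 \<or> x = 0)"

lemma sum_list_rescale_rep:
  "sum_list (map (\<lambda>(l, z, x). h l z x) (rescale_rep s R)) =
   sum_list (map (\<lambda>(l, z, x). h (l / of_real (s l z x)) z (s l z x *\<^sub>R x)) R)"
  by (simp add: rescale_rep_def comp_def case_prod_beta')

lemma valid_rep_rescale_rep [simp]: "valid_rep (rescale_rep s R) \<longleftrightarrow> valid_rep R"
  by (auto simp: valid_rep_def rescale_rep_def)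

lemma cdual_scaleR:
  assumes "complex_scalar cm" "cdual cm \<phi>"
  shows "\<phi> (r *\<^sub>R x) = of_real r * \<phi> x"
  using assms unfolding complex_scalar_def cdual_def by metis

lemma eval_rep_rescale_rep:
  assumes cm: "complex_scalar cm" and adm: "rescaling_admissible s R"
    and dual: "\<And>l z x. (l, z, x) \<in> set R \<Longrightarrow> cdual cm (f'' z)"
  shows "eval_rep f'' (rescale_rep s R) = eval_rep f'' R"
  unfolding eval_rep_def sum_list_rescale_rep
proof (intro arg_cong[where f = sum_list] map_cong refl, clarify)
  fix l z x assume t: "(l, z, x) \<in> set R"
  note scale = cdual_scaleR[OF cm dual[OF t]]
  show "l / of_real (s l z x) * f'' z (s l z x *\<^sub>R x) = l * f'' z x"
  proof (cases "s l z x = 0")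
    case True
    then have "l = 0 \<or> x = 0" using adm t unfolding rescaling_admissible_def by auto
    then show ?thesis using scale[of 0 x] True by auto
  qed (simp add: scale)
qed

lemma rescale_rep_in_representations:
  assumes "complex_scalar cm" "R \<in> representations cm R0" "rescaling_admissible s R"
  shows "rescale_rep s R \<in> representations cm R0"
proof -
  have "eval_rep f'' (rescale_rep s R) = eval_rep f'' R" if "(f, f'') \<in> BlochX cm" for f f''
  proof (rule eval_rep_rescale_rep[OF assms(1,3)])
    fix l z x assume "(l, z, x) \<in> set R"
    then have "z \<in> ball 0 1" using assms(2) by (auto simp: representations_def valid_rep_def)
    then show "cdual cm (f'' z)" using that by (auto simp: BlochX_def)
  qed
  then show ?thesis using assms(2) by (auto simp: representations_def same_gamma_def)
qed

definition d1_rep :: "(complex \<times> complex \<times> 'x::real_normed_vector) list \<Rightarrow> real" where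
  "d1_rep R = (SUP g\<in>BlochBall. Max (set (map (\<lambda>(l, z, x). cmod l * cmod (deriv g z)) R)))
                * sum_list (map (\<lambda>(l, z, x). norm x) R)"

definition d1_weighted_sum :: "(complex \<times> complex \<times> 'x::real_normed_vector) list \<Rightarrow> real" where
  "d1_weighted_sum R = sum_list (map (\<lambda>(l, z, x). cmod l / (1 - (cmod z)\<^sup>2) * norm x) R)"

lemma SUP_BlochBall_Max_eq:
  assumes "valid_rep R"
  shows "(SUP g\<in>BlochBall. Max (set (map (\<lambda>(l, z, x). cmod l * cmod (deriv g z)) R))) =
         Max (set (map (\<lambda>(l, z, x). cmod l / (1 - (cmod z)\<^sup>2)) R))"
    (is "(SUP g\<in>BlochBall. ?M g) = ?W")
proof (rule cSup_eq_maximum)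
  have in_ball: "z \<in> ball 0 1" if "(l, z, x) \<in> set R" for l z x
    using assms that by (auto simp: valid_rep_def)
  have nonempty: "R \<noteq> []" using assms by (simp add: valid_rep_def)
  have le_W: "?M g \<le> ?W" if g: "g \<in> BlochBall" for g
  proof -
    have "cmod l * cmod (deriv g z) \<le> cmod l / (1 - (cmod z)\<^sup>2)" if "(l, z, x) \<in> set R" for l z x
      using mult_left_mono[OF BlochBall_deriv_bound[OF g in_ball[OF that]], of "cmod l"] by simp
    also have "cmod l / (1 - (cmod z)\<^sup>2) \<le> ?W" if "(l, z, x) \<in> set R" for l z x
      using that by (intro Max_ge) force+
    finally show ?thesis using nonempty by (auto simp: Max_le_iff)
  qed
  then show "y \<le> ?W" if "y \<in> ?M ` BlochBall" for y
    using that by blast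
  have "?W \<in> set (map (\<lambda>(l, z, x). cmod l / (1 - (cmod z)\<^sup>2)) R)"
    using nonempty by (intro Max_in) auto
  then obtain l z x where t: "(l, z, x) \<in> set R" and W: "?W = cmod l / (1 - (cmod z)\<^sup>2)"
    by auto
  obtain g where g: "g \<in> BlochBall" "cmod (deriv g z) = 1 / (1 - (cmod z)\<^sup>2)"
    using BlochBall_extremal[OF in_ball[OF t]] by blast
  have "?W \<le> ?M g"
    using t g(2) W by (intro Max_ge) force+
  then show "?W \<in> ?M ` BlochBall"
    using le_W[OF g(1)] g(1) by (intro image_eqI[of _ _ g]) auto
qed

lemma d1_rep_eq:
  assumes "valid_rep R"
  shows "d1_rep R = Max (set (map (\<lambda>(l, z, x). cmod l / (1 - (cmod z)\<^sup>2)) R))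
                    * sum_list (map (\<lambda>(l, z, x). norm x) R)"
  unfolding d1_rep_def SUP_BlochBall_Max_eq[OF assms] ..

lemma d1_rep_nonneg:
  assumes "valid_rep R"
  shows "0 \<le> d1_rep R"
proof -
  obtain l z x where t: "(l, z, x) \<in> set R"
    using assms unfolding valid_rep_def by (metis last_in_set prod_cases3)
  have "0 \<le> cmod l / (1 - (cmod z)\<^sup>2)"
    using one_minus_norm_sq_pos[of z] assms t by (auto simp: valid_rep_def)
  also have "\<dots> \<le> Max (set (map (\<lambda>(l, z, x). cmod l / (1 - (cmod z)\<^sup>2)) R))"
    using t by (intro Max_ge) force+
  finally show ?thesis
    unfolding d1_rep_eq[OF assms] by (auto intro!: mult_nonneg_nonneg sum_list_nonneg)
qed

lemma d1_weighted_sum_le_d1_rep: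
  assumes "valid_rep R"
  shows "d1_weighted_sum R \<le> d1_rep R"
proof -
  let ?W = "Max (set (map (\<lambda>(l, z, x). cmod l / (1 - (cmod z)\<^sup>2)) R))"
  have "cmod l / (1 - (cmod z)\<^sup>2) * norm x \<le> ?W * norm x" if "(l, z, x) \<in> set R" for l z x
    using that by (intro mult_right_mono Max_ge) force+
  then have "d1_weighted_sum R \<le> sum_list (map (\<lambda>(l, z, x). ?W * norm x) R)"
    unfolding d1_weighted_sum_def by (intro sum_list_mono) auto
  also have "\<dots> = d1_rep R"
    unfolding d1_rep_eq[OF assms] sum_list_const_mult[symmetric] by (simp add: case_prod_beta')
  finally show ?thesis .
qed

lemma rescaling_admissible_d1:
  assumes "valid_rep R"
  shows "rescaling_admissible (\<lambda>l z x. cmod l / (1 - (cmod z)\<^sup>2)) R"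
  using assms one_minus_norm_sq_pos by (fastforce simp: rescaling_admissible_def valid_rep_def)

lemma d1_rep_rescale_le_d1_weighted_sum:
  assumes "valid_rep R"
  shows "d1_rep (rescale_rep (\<lambda>l z x. cmod l / (1 - (cmod z)\<^sup>2)) R) \<le> d1_weighted_sum R"
proof -
  define R' where "R' = rescale_rep (\<lambda>l z x. cmod l / (1 - (cmod z)\<^sup>2)) R"
  have valid': "valid_rep R'" using assms by (simp add: R'_def)
  have in_ball: "z \<in> ball 0 1" if "(l, z, x) \<in> set R" for l z x
    using assms that by (auto simp: valid_rep_def)
  have "cmod (l / of_real (cmod l / (1 - (cmod z)\<^sup>2))) / (1 - (cmod z)\<^sup>2) \<le> 1"
    if "(l, z, x) \<in> set R" for l z x
  proof -
    have c: "0 < 1 - (cmod z)\<^sup>2" using one_minus_norm_sq_pos[OF in_ball[OF that]] .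
    have "cmod (l / of_real (cmod l / (1 - (cmod z)\<^sup>2))) = cmod l / (cmod l / (1 - (cmod z)\<^sup>2))"
      unfolding norm_divide norm_of_real using c by simp
    then show ?thesis using c by (cases "l = 0") simp_all
  qed
  then have W'_le_1: "Max (set (map (\<lambda>(l, z, x). cmod l / (1 - (cmod z)\<^sup>2)) R')) \<le> 1"
    using valid' by (auto simp: R'_def rescale_rep_def valid_rep_def Max_le_iff)
  have N': "sum_list (map (\<lambda>(l, z, x). norm x) R') = d1_weighted_sum R"
    unfolding R'_def sum_list_rescale_rep d1_weighted_sum_def
    using one_minus_norm_sq_pos[OF in_ball]
    by (intro arg_cong[where f = sum_list] map_cong refl) (auto simp: less_imp_le)
  have "d1_rep R' \<le> 1 * sum_list (map (\<lambda>(l, z, x). norm x) R')"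
    unfolding d1_rep_eq[OF valid']
    by (intro mult_right_mono W'_le_1 sum_list_nonneg) auto
  then show ?thesis using N' by (simp add: R'_def)
qed

definition dinf_rep :: "(complex \<times> complex \<times> 'x::real_normed_vector) list \<Rightarrow> real" where
  "dinf_rep R = (SUP g\<in>BlochBall. sum_list (map (\<lambda>(l, z, x). cmod l * cmod (deriv g z)) R))
                  * Max (set (map (\<lambda>(l, z, x). norm x) R))"

definition dinf_weighted_sup :: "(complex \<times> complex \<times> 'x::real_normed_vector) list \<Rightarrow> real" where
  "dinf_weighted_sup R =
     (SUP g\<in>BlochBall. sum_list (map (\<lambda>(l, z, x). cmod l * cmod (deriv g z) * norm x) R))"

lemma bdd_above_BlochBall_sum:
  assumes "valid_rep R"
  shows "bdd_above ((\<lambda>g. sum_list (map (\<lambda>(l, z, x). cmod l * cmod (deriv g z)) R)) ` BlochBall)"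
proof (rule bdd_aboveI2)
  fix g assume g: "g \<in> BlochBall"
  have "cmod l * cmod (deriv g z) \<le> cmod l / (1 - (cmod z)\<^sup>2)" if "(l, z, x) \<in> set R" for l z x
    using mult_left_mono[OF BlochBall_deriv_bound[OF g], of z "cmod l"] assms that
    by (auto simp: valid_rep_def)
  then show "sum_list (map (\<lambda>(l, z, x). cmod l * cmod (deriv g z)) R)
      \<le> sum_list (map (\<lambda>(l, z, x). cmod l / (1 - (cmod z)\<^sup>2)) R)"
    by (intro sum_list_mono) auto
qed

lemma SUP_BlochBall_sum_nonneg:
  assumes "valid_rep R"
  shows "0 \<le> (SUP g\<in>BlochBall. sum_list (map (\<lambda>(l, z, x). cmod l * cmod (deriv g z)) R))"
  by (rule cSUP_upper2[OF bdd_above_BlochBall_sum[OF assms] zero_in_BlochBall])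
    (auto intro: sum_list_nonneg)

lemma Max_norm_nonneg:
  assumes "R \<noteq> []"
  shows "0 \<le> Max (set (map (\<lambda>(l, z, x). norm x) R))"
proof -
  obtain l z x where t: "(l, z, x) \<in> set R"
    using assms by (metis last_in_set prod_cases3)
  show ?thesis
    using t by (intro order.trans[OF norm_ge_zero[of x]] Max_ge) force+
qed

lemma dinf_rep_nonneg:
  assumes "valid_rep R"
  shows "0 \<le> dinf_rep R"
  using SUP_BlochBall_sum_nonneg[OF assms] Max_norm_nonneg assms
  unfolding dinf_rep_def valid_rep_def by (blast intro: mult_nonneg_nonneg)

lemma dinf_weighted_sup_le_dinf_rep:
  assumes "valid_rep R"
  shows "dinf_weighted_sup R \<le> dinf_rep R"
  unfolding dinf_weighted_sup_def
proof (rule cSUP_least)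
  show "BlochBall \<noteq> {}" using zero_in_BlochBall by blast
  fix g assume g: "g \<in> BlochBall"
  let ?M = "Max (set (map (\<lambda>(l, z, x). norm x) R))"
  have "norm x \<le> ?M" if "(l, z, x) \<in> set R" for l z x
    using that by (intro Max_ge) force+
  then have "sum_list (map (\<lambda>(l, z, x). cmod l * cmod (deriv g z) * norm x) R)
      \<le> sum_list (map (\<lambda>(l, z, x). cmod l * cmod (deriv g z) * ?M) R)"
    by (intro sum_list_mono) (auto intro: mult_left_mono)
  also have "\<dots> = sum_list (map (\<lambda>(l, z, x). cmod l * cmod (deriv g z)) R) * ?M"
    unfolding sum_list_mult_const[symmetric] by (simp add: case_prod_beta')
  also have "\<dots> \<le> dinf_rep R"
    unfolding dinf_rep_def
    using assms Max_norm_nonneg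
    by (intro mult_right_mono cSUP_upper[OF g bdd_above_BlochBall_sum[OF assms]])
      (auto simp: valid_rep_def)
  finally show "sum_list (map (\<lambda>(l, z, x). cmod l * cmod (deriv g z) * norm x) R) \<le> dinf_rep R" .
qed

lemma rescaling_admissible_dinf: "rescaling_admissible (\<lambda>l z x. 1 / norm x) R"
  by (simp add: rescaling_admissible_def)

lemma dinf_rep_rescale_le_dinf_weighted_sup:
  assumes "valid_rep R"
  shows "dinf_rep (rescale_rep (\<lambda>l z x. 1 / norm x) R) \<le> dinf_weighted_sup R"
proof -
  define R' where "R' = rescale_rep (\<lambda>l z x. 1 / norm x) R"
  have valid': "valid_rep R'" using assms by (simp add: R'_def)
  have SUP_eq: "(SUP g\<in>BlochBall. sum_list (map (\<lambda>(l, z, x). cmod l * cmod (deriv g z)) R'))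
      = dinf_weighted_sup R"
    unfolding R'_def sum_list_rescale_rep dinf_weighted_sup_def
    by (intro SUP_cong refl arg_cong[where f = sum_list] map_cong) (auto simp: norm_mult)
  have "norm ((1 / norm x) *\<^sub>R x) \<le> 1" for x :: 'a
    by (cases "x = 0") simp_all
  then have M'_le_1: "Max (set (map (\<lambda>(l, z, x). norm x) R')) \<le> 1"
    using valid' by (auto simp: R'_def rescale_rep_def valid_rep_def Max_le_iff)
  have "dinf_rep R' \<le> dinf_weighted_sup R * 1"
    unfolding dinf_rep_def SUP_eq
    using SUP_BlochBall_sum_nonneg[OF valid'] SUP_eq M'_le_1 by (intro mult_left_mono) auto
  then show ?thesis by (simp add: R'_def)
qed

lemma d1_eq_INF_d1_weighted_sum:
  assumes "complex_scalar cm" "valid_rep R0"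
  shows "d1 cm R0 = (INF R\<in>representations cm R0. d1_weighted_sum R)"
proof -
  have "d1 cm R0 = (INF R\<in>representations cm R0. d1_rep R)"
    by (simp add: d1_def d1_rep_def representations_def setcompr_eq_image)
  also have "\<dots> = (INF R\<in>representations cm R0. d1_weighted_sum R)"
  proof (rule INF_eq_INF_if_interleaved)
    show "representations cm R0 \<noteq> {}"
      using self_in_representations[OF assms(2)] by blast
    show "bdd_below (d1_rep ` representations cm R0)"
      by (intro bdd_belowI2[where m = 0] d1_rep_nonneg valid_rep_if_in_representations)
    fix R assume R: "R \<in> representations cm R0"
    note valid = valid_rep_if_in_representations[OF R]
    show "d1_weighted_sum R \<le> d1_rep R"
      using d1_weighted_sum_le_d1_rep[OF valid] .
    show "\<exists>R'\<in>representations cm R0. d1_rep R' \<le> d1_weighted_sum R"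
      using rescale_rep_in_representations[OF assms(1) R rescaling_admissible_d1[OF valid]]
        d1_rep_rescale_le_d1_weighted_sum[OF valid] by blast
  qed
  finally show ?thesis .
qed

lemma dinf_eq_INF_dinf_weighted_sup:
  assumes "complex_scalar cm" "valid_rep R0"
  shows "dinf cm R0 = (INF R\<in>representations cm R0. dinf_weighted_sup R)"
proof -
  have "dinf cm R0 = (INF R\<in>representations cm R0. dinf_rep R)"
    by (simp add: dinf_def dinf_rep_def representations_def setcompr_eq_image)
  also have "\<dots> = (INF R\<in>representations cm R0. dinf_weighted_sup R)"
  proof (rule INF_eq_INF_if_interleaved)
    show "representations cm R0 \<noteq> {}"
      using self_in_representations[OF assms(2)] by blast
    show "bdd_below (dinf_rep ` representations cm R0)"
      by (intro bdd_belowI2[where m = 0] dinf_rep_nonneg valid_rep_if_in_representations)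
    fix R assume R: "R \<in> representations cm R0"
    note valid = valid_rep_if_in_representations[OF R]
    show "dinf_weighted_sup R \<le> dinf_rep R"
      using dinf_weighted_sup_le_dinf_rep[OF valid] .
    show "\<exists>R'\<in>representations cm R0. dinf_rep R' \<le> dinf_weighted_sup R"
      using rescale_rep_in_representations[OF assms(1) R rescaling_admissible_dinf]
        dinf_rep_rescale_le_dinf_weighted_sup[OF valid] by blast
  qed
  finally show ?thesis .
qed

theorem proposition2p7:
  fixes cm :: "complex \<Rightarrow> 'x::banach \<Rightarrow> 'x"
    and R0 :: "(complex \<times> complex \<times> 'x) list"
  assumes "complex_scalar cm"
    and "valid_rep R0"
  shows "d1 cm R0 = Inf {sum_list (map (\<lambda>(l, z, x). cmod l / (1 - (cmod z)\<^sup>2) * norm x) R)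
                        | R. valid_rep R \<and> same_gamma cm R R0} \<and>
         dinf cm R0 = Inf {(SUP g\<in>BlochBall. sum_list (map (\<lambda>(l, z, x). cmod l * cmod (deriv g z) * norm x) R))
                        | R. valid_rep R \<and> same_gamma cm R R0}"
  unfolding d1_eq_INF_d1_weighted_sum[OF assms] dinf_eq_INF_dinf_weighted_sup[OF assms]
    setcompr_eq_image representations_def d1_weighted_sum_def[abs_def] dinf_weighted_sup_def[abs_def]
  by (intro conjI refl)

end
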